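(* Let $\mathcal{A}$ and $\mathcal{B}$ be unital normed algebras (over $\mathbb{R}$ or $\mathbb{C}$), let $\mathcal{M}$ be a normed $(\mathcal{A},\mathcal{B})$-bimodule which is faithful as a left $\mathcal{A}$-module and as a right $\mathcal{B}$-module, and let $\mathcal{T}=Tri(\mathcal{A},\mathcal{M},\mathcal{B})$ be the associated unital triangular normed algebra, with identity $\mathbf{1}$ and center $Z(\mathcal{T})$. Let $n>1$ be an integer, let $\gamma$ be an invertible element of $Z(\mathcal{T})$, and let $\Psi,\Omega:\mathcal{T}\to\mathcal{T}$ be linear mappings with $\Omega(\mathbf{1})\in Z(\mathcal{T})$. Suppose that $\Psi$ and $\Omega$ satisfy one of the following: (i) $\Psi(X^n)=\gamma X^{n-1}\Omega(X)=\gamma\,\Omega(X)X^{n-1}$ for all $X\in\mathcal{T}$; (ii) $\Psi(X^n)=\gamma X\,\Omega(X^{n-1})=\gamma\,\Omega(X^{n-1})X$ for all $X\in\mathcal{T}$. Then $\Psi$ and $\Omega$ are both continuous.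
   Context: The triangular algebra $Tri(\mathcal{A},\mathcal{M},\mathcal{B})$ is the set of matrices $\begin{bmatrix} a & m\\ 0 & b\end{bmatrix}$ with $a\in\mathcal{A}$, $m\in\mathcal{M}$, $b\in\mathcal{B}$, under the usual matrix operations. When $\mathcal{A},\mathcal{B}$ are normed algebras and $\mathcal{M}$ is a normed bimodule, $\mathcal{T}$ is normed by $\left\|\begin{bmatrix} a & m\\ 0 & b\end{bmatrix}\right\|=\|a\|_{\mathcal{A}}+\|m\|_{\mathcal{M}}+\|b\|_{\mathcal{B}}$. Its center is $Z(\mathcal{T})=\{a\oplus b: a\in Z(\mathcal{A}),\ b\in Z(\mathcal{B}),\ am=mb \text{ for all } m\in\mathcal{M}\}$. *)

theory Defs
  imports "HOL-Analysis.Analysis"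
begin

definition normed_bimodule ::
  "('a::real_normed_algebra_1 \<Rightarrow> 'm::real_normed_vector \<Rightarrow> 'm) \<Rightarrow>
   ('m \<Rightarrow> 'b::real_normed_algebra_1 \<Rightarrow> 'm) \<Rightarrow> bool" where
  "normed_bimodule la rb \<longleftrightarrow>
     bilinear la \<and> bilinear rb \<and>
     (\<forall>a a' m. la (a * a') m = la a (la a' m)) \<and>
     (\<forall>m. la 1 m = m) \<and>
     (\<forall>b b' m. rb m (b * b') = rb (rb m b) b') \<and>
     (\<forall>m. rb m 1 = m) \<and>
     (\<forall>a m b. rb (la a m) b = la a (rb m b)) \<and>
     (\<forall>a m. norm (la a m) \<le> norm a * norm m) \<and>
     (\<forall>m b. norm (rb m b) \<le> norm m * norm b)"

definition faithful_left :: "('a::real_normed_algebra_1 \<Rightarrow> 'm::real_normed_vector \<Rightarrow> 'm) \<Rightarrow> bool" where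
  "faithful_left la \<longleftrightarrow> (\<forall>a. (\<forall>m. la a m = 0) \<longrightarrow> a = 0)"

definition faithful_right :: "('m::real_normed_vector \<Rightarrow> 'b::real_normed_algebra_1 \<Rightarrow> 'm) \<Rightarrow> bool" where
  "faithful_right rb \<longleftrightarrow> (\<forall>b. (\<forall>m. rb m b = 0) \<longrightarrow> b = 0)"

text \<open>Elements of Tri(A,M,B) are triples (a,m,b) representing [[a,m],[0,b]].\<close>

definition tri_mult ::
  "('a::real_normed_algebra_1 \<Rightarrow> 'm::real_normed_vector \<Rightarrow> 'm) \<Rightarrow>
   ('m \<Rightarrow> 'b::real_normed_algebra_1 \<Rightarrow> 'm) \<Rightarrow>
   'a \<times> 'm \<times> 'b \<Rightarrow> 'a \<times> 'm \<times> 'b \<Rightarrow> 'a \<times> 'm \<times> 'b" where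
  "tri_mult la rb X Y =
     (case X of (a, m, b) \<Rightarrow> case Y of (a', m', b') \<Rightarrow>
        (a * a', la a m' + rb m b', b * b'))"

definition tri_one :: "'a::real_normed_algebra_1 \<times> 'm::real_normed_vector \<times> 'b::real_normed_algebra_1" where
  "tri_one = (1, 0, 1)"

primrec tri_pow ::
  "('a::real_normed_algebra_1 \<Rightarrow> 'm::real_normed_vector \<Rightarrow> 'm) \<Rightarrow>
   ('m \<Rightarrow> 'b::real_normed_algebra_1 \<Rightarrow> 'm) \<Rightarrow>
   'a \<times> 'm \<times> 'b \<Rightarrow> nat \<Rightarrow> 'a \<times> 'm \<times> 'b" where
  "tri_pow la rb X 0 = tri_one"
| "tri_pow la rb X (Suc n) = tri_mult la rb X (tri_pow la rb X n)"

definition tri_center ::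
  "('a::real_normed_algebra_1 \<Rightarrow> 'm::real_normed_vector \<Rightarrow> 'm) \<Rightarrow>
   ('m \<Rightarrow> 'b::real_normed_algebra_1 \<Rightarrow> 'm) \<Rightarrow> ('a \<times> 'm \<times> 'b) set" where
  "tri_center la rb = {Z. \<forall>X. tri_mult la rb Z X = tri_mult la rb X Z}"

definition tri_invertible ::
  "('a::real_normed_algebra_1 \<Rightarrow> 'm::real_normed_vector \<Rightarrow> 'm) \<Rightarrow>
   ('m \<Rightarrow> 'b::real_normed_algebra_1 \<Rightarrow> 'm) \<Rightarrow> 'a \<times> 'm \<times> 'b \<Rightarrow> bool" where
  "tri_invertible la rb Z \<longleftrightarrow>
     (\<exists>W. tri_mult la rb Z W = tri_one \<and> tri_mult la rb W Z = tri_one)"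

definition tri_norm :: "'a::real_normed_algebra_1 \<times> 'm::real_normed_vector \<times> 'b::real_normed_algebra_1 \<Rightarrow> real" where
  "tri_norm X = (case X of (a, m, b) \<Rightarrow> norm a + norm m + norm b)"

definition tri_continuous ::
  "('a::real_normed_algebra_1 \<times> 'm::real_normed_vector \<times> 'b::real_normed_algebra_1 \<Rightarrow> 'a \<times> 'm \<times> 'b) \<Rightarrow> bool" where
  "tri_continuous f \<longleftrightarrow>
     (\<forall>X. \<forall>\<epsilon>>0. \<exists>\<delta>>0. \<forall>Y. tri_norm (Y - X) < \<delta> \<longrightarrow> tri_norm (f Y - f X) < \<epsilon>)"

end

theory Submission
  imports Defs
begin

(* Put X = 1 + tU with t real. Both sides of the identity, and both sides of the commutation
   condition, become polynomials in t with coefficients in T, and comparing the coefficients of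
   t and t^2 shows, with c = \<Omega>(1), that U commutes with \<Omega>(U) and that
   \<Omega>(U^2) + U^2 c = 2 U \<Omega>(U). So D(U) = \<Omega>(U) - U c is a commuting Jordan derivation
   of T. Such a map kills every idempotent, hence the corner idempotents and the off-diagonal
   part M, and, by polarisation against the corner idempotents and faithfulness of M, also the
   diagonal corners A and B; so D = 0. Therefore \<Omega>(X) = X c, the coefficient of t then gives
   \<Psi>(X) = \<gamma> X c, and both maps are multiplications by fixed elements, which are Lipschitz. *)

section \<open>Vector-valued polynomials in a real variable\<close>

lemma polyfun_vector_eq_0:
  fixes c :: "nat \<Rightarrow> 'v::real_normed_vector"
  assumes "\<And>t::real. (\<Sum>j\<le>n. t^j *\<^sub>R c j) = 0" and "j \<le> n"
  shows "c j = 0"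
  using assms
proof (induction n arbitrary: c j)
  case 0
  then show ?case by simp
next
  case (Suc n)
  define q where "q t = (\<Sum>i\<le>n. t^i *\<^sub>R c (Suc i))" for t :: real
  have split: "(\<Sum>j\<le>Suc n. t^j *\<^sub>R c j) = c 0 + t *\<^sub>R q t" for t :: real
    by (simp add: sum.atMost_Suc_shift scaleR_sum_right q_def del: sum.atMost_Suc)
  have c0: "c 0 = 0"
    using Suc.prems(1)[of 0] unfolding split by simp
  have q_nonzero: "q t = 0" if "t \<noteq> 0" for t
    using Suc.prems(1)[of t] that unfolding split c0 by simp
  have "(q \<longlongrightarrow> q 0) (at 0)"
    unfolding q_def by (intro tendsto_intros)
  moreover have "(q \<longlongrightarrow> 0) (at 0)"
    by (rule tendsto_eventually) (simp add: eventually_at_filter q_nonzero)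
  ultimately have "q 0 = 0"
    by (rule LIM_unique)
  then have "q t = 0" for t
    using q_nonzero by (cases "t = 0") auto
  then show ?case
    using Suc.IH[of "\<lambda>i. c (Suc i)"] Suc.prems(2) c0 unfolding q_def
    by (cases j) auto
qed

lemma polyfun_vector_eq_coeffs:
  fixes a b :: "nat \<Rightarrow> 'v::real_normed_vector"
  assumes "\<And>t::real. (\<Sum>j\<le>n. t^j *\<^sub>R a j) = (\<Sum>j\<le>n. t^j *\<^sub>R b j)" and "j \<le> n"
  shows "a j = b j"
proof -
  have "(\<Sum>j\<le>n. t^j *\<^sub>R (a j - b j)) = 0" for t :: real
    using assms(1)[of t] by (simp add: scaleR_diff_right sum_subtractf)
  from polyfun_vector_eq_0[OF this assms(2)] show ?thesis by simp
qed

lemma polyfun_vector_shift: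
  fixes a b :: "nat \<Rightarrow> 'v::real_vector"
  shows "(\<Sum>j\<le>n. t^j *\<^sub>R a j) + t *\<^sub>R (\<Sum>j\<le>n. t^j *\<^sub>R b j) =
    (\<Sum>j\<le>Suc n. t^j *\<^sub>R ((if j \<le> n then a j else 0) + (case j of 0 \<Rightarrow> 0 | Suc i \<Rightarrow> b i)))"
proof -
  have "(\<Sum>j\<le>Suc n. t^j *\<^sub>R (if j \<le> n then a j else 0)) = (\<Sum>j\<le>n. t^j *\<^sub>R a j)"
    by simp
  moreover have "(\<Sum>j\<le>Suc n. t^j *\<^sub>R (case j of 0 \<Rightarrow> 0 | Suc i \<Rightarrow> b i)) =
      t *\<^sub>R (\<Sum>j\<le>n. t^j *\<^sub>R b j)"
    by (simp only: sum.atMost_Suc_shift) (simp add: scaleR_sum_right del: sum.atMost_Suc)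
  ultimately show ?thesis
    by (simp only: scaleR_add_right sum.distrib)
qed

lemma polyfun_vector_shift_eq_coeffs:
  fixes a b c d :: "nat \<Rightarrow> 'v::real_normed_vector"
  assumes "\<And>t::real. (\<Sum>j\<le>n. t^j *\<^sub>R a j) + t *\<^sub>R (\<Sum>j\<le>n. t^j *\<^sub>R b j) =
                      (\<Sum>j\<le>n. t^j *\<^sub>R c j) + t *\<^sub>R (\<Sum>j\<le>n. t^j *\<^sub>R d j)"
    and "Suc k \<le> n"
  shows "a (Suc k) + b k = c (Suc k) + d k"
proof -
  let ?e = "\<lambda>a b j. (if j \<le> n then a j else 0) + (case j of 0 \<Rightarrow> 0 | Suc i \<Rightarrow> b i)"
  have "(\<Sum>j\<le>Suc n. t^j *\<^sub>R ?e a b j) = (\<Sum>j\<le>Suc n. t^j *\<^sub>R ?e c d j)" for t :: real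
    using assms(1)[of t] unfolding polyfun_vector_shift .
  from polyfun_vector_eq_coeffs[OF this, of "Suc k"] assms(2) show ?thesis by simp
qed

lemma polyfun_vector_eq_shift_coeffs:
  fixes a c d :: "nat \<Rightarrow> 'v::real_normed_vector"
  assumes "\<And>t::real. (\<Sum>j\<le>n. t^j *\<^sub>R a j) =
                      (\<Sum>j\<le>n. t^j *\<^sub>R c j) + t *\<^sub>R (\<Sum>j\<le>n. t^j *\<^sub>R d j)"
    and "Suc k \<le> n"
  shows "a (Suc k) = c (Suc k) + d k"
proof -
  have "(\<Sum>j\<le>n. t^j *\<^sub>R a j) + t *\<^sub>R (\<Sum>j\<le>n. t^j *\<^sub>R (0::'v)) =
        (\<Sum>j\<le>n. t^j *\<^sub>R c j) + t *\<^sub>R (\<Sum>j\<le>n. t^j *\<^sub>R d j)" for t :: real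
    using assms(1) by simp
  from polyfun_vector_shift_eq_coeffs[OF this assms(2)] show ?thesis by simp
qed

lemma real_choose_two: "real (k choose 2) = real k * (real k - 1) / 2"
  by (induction k) (simp_all add: numeral_2_eq_2 field_simps)

lemma binomial_coeffs_elimination:
  fixes P G\<^sub>1 G\<^sub>2 G\<^sub>3 :: "'v::real_vector"
  assumes "1 < n"
    and first: "real n *\<^sub>R P = real (n - 1) *\<^sub>R G\<^sub>1 + G\<^sub>3"
    and second: "real (n choose 2) *\<^sub>R P = real (n - 1 choose 2) *\<^sub>R G\<^sub>1 + real (n - 1) *\<^sub>R G\<^sub>2"
  shows "G\<^sub>1 + G\<^sub>3 = 2 *\<^sub>R G\<^sub>2"
proof -
  obtain k where n: "n = Suc k" and "k \<noteq> 0"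
    using assms(1) by (cases n) auto
  have "real k / 2 * real n = real (n choose 2)"
    unfolding n real_choose_two by (simp add: field_simps)
  have "(real k / 2) *\<^sub>R (real k *\<^sub>R G\<^sub>1 + G\<^sub>3) = (real k / 2) *\<^sub>R (real n *\<^sub>R P)"
    using first n by simp
  also have "\<dots> = real (n choose 2) *\<^sub>R P"
    using \<open>real k / 2 * real n = real (n choose 2)\<close> by simp
  also have "\<dots> = (real k * (real k - 1) / 2) *\<^sub>R G\<^sub>1 + real k *\<^sub>R G\<^sub>2"
    using second unfolding n real_choose_two by simp
  finally have "(real k / 2) *\<^sub>R (real k *\<^sub>R G\<^sub>1 + G\<^sub>3) =
      (real k * (real k - 1) / 2) *\<^sub>R G\<^sub>1 + real k *\<^sub>R G\<^sub>2" .
  moreover have "(real k / 2) *\<^sub>R (G\<^sub>1 + G\<^sub>3 - 2 *\<^sub>R G\<^sub>2) =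
      (real k / 2) *\<^sub>R (real k *\<^sub>R G\<^sub>1 + G\<^sub>3) -
      ((real k * (real k - 1) / 2) *\<^sub>R G\<^sub>1 + real k *\<^sub>R G\<^sub>2)"
    by (simp add: algebra_simps flip: scaleR_left_diff_distrib)
      (subst scaleR_add_left[symmetric], simp add: field_simps)
  ultimately have "(real k / 2) *\<^sub>R (G\<^sub>1 + G\<^sub>3 - 2 *\<^sub>R G\<^sub>2) = 0"
    by simp
  with \<open>k \<noteq> 0\<close> show ?thesis by simp
qed

lemma eq_if_scaleR_eq_pred_add:
  fixes P G :: "'v::real_vector"
  assumes "0 < n" and "real n *\<^sub>R P = real (n - 1) *\<^sub>R G + G"
  shows "P = G"
proof -
  have "real n *\<^sub>R P = real n *\<^sub>R G"
    using assms by (simp add: scaleR_diff_left)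
  with assms(1) show ?thesis
    by simp
qed

section \<open>The triangular algebra\<close>

lemma tri_norm_ge_zero: "0 \<le> tri_norm X"
  by (cases X) (simp add: tri_norm_def)

lemma tri_continuous_if_lipschitz:
  assumes "\<And>X Y. tri_norm (f X - f Y) \<le> K * tri_norm (X - Y)"
  shows "tri_continuous f"
  unfolding tri_continuous_def
proof (intro allI impI)
  fix X and \<epsilon> :: real
  assume "\<epsilon> > 0"
  show "\<exists>\<delta>>0. \<forall>Y. tri_norm (Y - X) < \<delta> \<longrightarrow> tri_norm (f Y - f X) < \<epsilon>"
  proof (intro exI conjI allI impI)
    show "\<epsilon> / (\<bar>K\<bar> + 1) > 0"
      using \<open>\<epsilon> > 0\<close> by simp
    fix Y
    assume "tri_norm (Y - X) < \<epsilon> / (\<bar>K\<bar> + 1)"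
    then have "(\<bar>K\<bar> + 1) * tri_norm (Y - X) < \<epsilon>"
      by (simp add: field_simps)
    moreover have "K * tri_norm (Y - X) \<le> (\<bar>K\<bar> + 1) * tri_norm (Y - X)"
      using tri_norm_ge_zero[of "Y - X"] by (intro mult_right_mono) auto
    ultimately show "tri_norm (f Y - f X) < \<epsilon>"
      using assms[of Y X] by linarith
  qed
qed

locale tri_algebra =
  fixes la :: "'a::real_normed_algebra_1 \<Rightarrow> 'm::real_normed_vector \<Rightarrow> 'm"
    and rb :: "'m \<Rightarrow> 'b::real_normed_algebra_1 \<Rightarrow> 'm"
  assumes normed_bimodule: "normed_bimodule la rb"
begin

abbreviation mult :: "'a \<times> 'm \<times> 'b \<Rightarrow> 'a \<times> 'm \<times> 'b \<Rightarrow> 'a \<times> 'm \<times> 'b"  (infixl "\<odot>" 70)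
  where "X \<odot> Y \<equiv> tri_mult la rb X Y"

abbreviation pow :: "'a \<times> 'm \<times> 'b \<Rightarrow> nat \<Rightarrow> 'a \<times> 'm \<times> 'b"
  where "pow X k \<equiv> tri_pow la rb X k"

lemma bilinear_la: "bilinear la" and bilinear_rb: "bilinear rb"
  and la_mult: "la (a * a') m = la a (la a' m)" and la_one [simp]: "la 1 m = m"
  and rb_mult: "rb m (b * b') = rb (rb m b) b'" and rb_one [simp]: "rb m 1 = m"
  and rb_la: "rb (la a m) b = la a (rb m b)"
  and norm_la: "norm (la a m) \<le> norm a * norm m"
  and norm_rb: "norm (rb m b) \<le> norm m * norm b"
  using normed_bimodule unfolding normed_bimodule_def by auto

lemma la_zero [simp]: "la 0 m = 0" "la a 0 = 0"
  and rb_zero [simp]: "rb 0 b = 0" "rb m 0 = 0"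
  using bilinear_lzero[OF bilinear_la] bilinear_rzero[OF bilinear_la]
    bilinear_lzero[OF bilinear_rb] bilinear_rzero[OF bilinear_rb] by auto

lemma mult_Pair [simp]: "(a, m, b) \<odot> (a', m', b') = (a * a', la a m' + rb m b', b * b')"
  by (simp add: tri_mult_def)

lemma bilinear_mult: "bilinear (\<odot>)"
  unfolding bilinear_def
proof (intro allI conjI linearI)
  fix X Y Z :: "'a \<times> 'm \<times> 'b" and r :: real
  show "Z \<odot> (X + Y) = Z \<odot> X + Z \<odot> Y" "(X + Y) \<odot> Z = X \<odot> Z + Y \<odot> Z"
    by (cases X; cases Y; cases Z;
        simp add: bilinear_ladd[OF bilinear_la] bilinear_radd[OF bilinear_la]
          bilinear_ladd[OF bilinear_rb] bilinear_radd[OF bilinear_rb] algebra_simps)+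
  show "Z \<odot> (r *\<^sub>R X) = r *\<^sub>R (Z \<odot> X)" "(r *\<^sub>R X) \<odot> Z = r *\<^sub>R (X \<odot> Z)"
    by (cases X; cases Z;
        simp add: bilinear_lmul[OF bilinear_la] bilinear_rmul[OF bilinear_la]
          bilinear_lmul[OF bilinear_rb] bilinear_rmul[OF bilinear_rb] scaleR_add_right)+
qed

lemmas mult_add_left = bilinear_ladd[OF bilinear_mult]
  and mult_add_right = bilinear_radd[OF bilinear_mult]
  and mult_diff_left = bilinear_lsub[OF bilinear_mult]
  and mult_diff_right = bilinear_rsub[OF bilinear_mult]
  and mult_scaleR_left = bilinear_lmul[OF bilinear_mult]
  and mult_scaleR_right = bilinear_rmul[OF bilinear_mult]
  and mult_zero_left = bilinear_lzero[OF bilinear_mult]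
  and mult_zero_right = bilinear_rzero[OF bilinear_mult]

lemma mult_sum_left: "(\<Sum>j\<in>S. f j) \<odot> Y = (\<Sum>j\<in>S. f j \<odot> Y)"
  and mult_sum_right: "X \<odot> (\<Sum>j\<in>S. f j) = (\<Sum>j\<in>S. X \<odot> f j)"
  using linear_sum[of "\<lambda>X. X \<odot> Y"] linear_sum[of "\<lambda>Y. X \<odot> Y"] bilinear_mult
  unfolding bilinear_def by (auto simp: o_def)

lemma mult_assoc: "(X \<odot> Y) \<odot> Z = X \<odot> (Y \<odot> Z)"
  by (cases X; cases Y; cases Z)
    (simp add: bilinear_radd[OF bilinear_la] bilinear_ladd[OF bilinear_rb] la_mult rb_mult rb_la
      mult.assoc add.assoc)

lemma one_mult [simp]: "tri_one \<odot> X = X" and mult_one [simp]: "X \<odot> tri_one = X"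
  by (cases X; simp add: tri_one_def)+

lemma center_commute: "c \<in> tri_center la rb \<Longrightarrow> c \<odot> X = X \<odot> c"
  unfolding tri_center_def by blast

lemma linear_mult_right: "linear (\<lambda>X. X \<odot> c)"
  using bilinear_mult unfolding bilinear_def by blast

lemma pow_one_plus_scaleR:
  "pow (tri_one + t *\<^sub>R U) k = (\<Sum>j\<le>k. t^j *\<^sub>R (real (k choose j) *\<^sub>R pow U j))"
proof (induction k)
  case 0
  show ?case by simp
next
  case (Suc k)
  let ?S = "\<lambda>k. \<Sum>j\<le>k. t^j *\<^sub>R (real (k choose j) *\<^sub>R pow U j)"
  let ?T = "\<Sum>j\<le>k. t^Suc j *\<^sub>R (real (k choose j) *\<^sub>R pow U (Suc j))"
  have "pow (tri_one + t *\<^sub>R U) (Suc k) = ?S k + t *\<^sub>R (U \<odot> ?S k)"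
    using Suc.IH by (simp add: mult_add_left mult_scaleR_left)
  also have "\<dots> = ?S k + ?T"
    by (simp add: mult_sum_right mult_scaleR_right scaleR_sum_right mult.assoc)
  also have "?S k = tri_one + (\<Sum>j\<le>k. t^Suc j *\<^sub>R (real (k choose Suc j) *\<^sub>R pow U (Suc j)))"
  proof -
    have "?S k = (\<Sum>j\<le>Suc k. t^j *\<^sub>R (real (k choose j) *\<^sub>R pow U j))"
      by simp
    then show ?thesis
      by (simp only: sum.atMost_Suc_shift) simp
  qed
  also have "\<dots> + ?T = ?S (Suc k)"
    by (simp only: sum.atMost_Suc_shift)
      (simp add: scaleR_add_left scaleR_add_right sum.distrib add_ac del: tri_pow.simps(2))
  finally show ?case .
qed

lemma pow_one_plus_scaleR_upto:
  assumes "k \<le> N"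
  shows "pow (tri_one + t *\<^sub>R U) k = (\<Sum>j\<le>N. t^j *\<^sub>R (real (k choose j) *\<^sub>R pow U j))"
  unfolding pow_one_plus_scaleR using assms
  by (intro sum.mono_neutral_left) auto

lemma tri_norm_mult: "tri_norm (X \<odot> Y) \<le> tri_norm X * tri_norm Y"
proof -
  obtain a m b a' m' b' where XY: "X = (a, m, b)" "Y = (a', m', b')"
    by (cases X; cases Y) auto
  have "tri_norm (X \<odot> Y) \<le>
      norm a * norm a' + (norm a * norm m' + norm m * norm b') + norm b * norm b'"
    using norm_mult_ineq[of a a'] norm_mult_ineq[of b b']
      norm_triangle_le[OF add_mono[OF norm_la[of a m'] norm_rb[of m b']]]
    by (simp add: XY tri_norm_def)
  also have "\<dots> \<le> (norm a + norm m + norm b) * (norm a' + norm m' + norm b')"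
    by (simp add: algebra_simps)
  finally show ?thesis
    by (simp add: XY tri_norm_def)
qed

lemma tri_continuous_sandwich: "tri_continuous (\<lambda>X. A \<odot> (X \<odot> B))"
proof (rule tri_continuous_if_lipschitz)
  fix X Y
  have "tri_norm (A \<odot> (X \<odot> B) - A \<odot> (Y \<odot> B)) = tri_norm (A \<odot> ((X - Y) \<odot> B))"
    by (simp only: mult_diff_left mult_diff_right)
  also have "\<dots> \<le> tri_norm A * (tri_norm (X - Y) * tri_norm B)"
    using tri_norm_mult tri_norm_ge_zero by (meson mult_left_mono order_trans)
  finally show "tri_norm (A \<odot> (X \<odot> B) - A \<odot> (Y \<odot> B)) \<le> (tri_norm A * tri_norm B) * tri_norm (X - Y)"
    by (simp add: mult_ac)
qed

end

section \<open>Commuting Jordan derivations vanish\<close>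

locale commuting_jordan_derivation = tri_algebra la rb
  for la :: "'a::real_normed_algebra_1 \<Rightarrow> 'm::real_normed_vector \<Rightarrow> 'm"
    and rb :: "'m \<Rightarrow> 'b::real_normed_algebra_1 \<Rightarrow> 'm" +
  fixes D :: "'a \<times> 'm \<times> 'b \<Rightarrow> 'a \<times> 'm \<times> 'b"
  assumes linear: "linear D"
    and jordan: "D (U \<odot> U) = U \<odot> D U + D U \<odot> U"
    and commuting: "U \<odot> D U = D U \<odot> U"
begin

lemmas D_add = linear_add[OF linear] and D_diff = linear_diff[OF linear]
  and D_scaleR = linear_scale[OF linear]

lemma idempotent_zero:
  assumes "E \<odot> E = E"
  shows "D E = 0"
proof -
  have DE: "D E = 2 *\<^sub>R (E \<odot> D E)"
    using jordan[of E] commuting[of E] assms by (simp add: scaleR_2)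
  have "E \<odot> D E = 2 *\<^sub>R ((E \<odot> E) \<odot> D E)"
    by (subst DE) (simp only: mult_scaleR_right mult_assoc)
  then have "E \<odot> D E = 0"
    using assms by (simp add: scaleR_2)
  with DE show ?thesis by simp
qed

lemma polarization: "D (X \<odot> Y + Y \<odot> X) = X \<odot> D Y + D Y \<odot> X + Y \<odot> D X + D X \<odot> Y"
proof -
  have "(X + Y) \<odot> (X + Y) = X \<odot> X + (X \<odot> Y + Y \<odot> X) + Y \<odot> Y"
    by (simp add: mult_add_left mult_add_right algebra_simps)
  then have "D (X \<odot> X) + D (X \<odot> Y + Y \<odot> X) + D (Y \<odot> Y) = D ((X + Y) \<odot> (X + Y))"
    by (simp only: D_add)
  also have "\<dots> = D (X \<odot> X) + (X \<odot> D Y + D Y \<odot> X + Y \<odot> D X + D X \<odot> Y) + D (Y \<odot> Y)"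
    unfolding jordan by (simp add: D_add mult_add_left mult_add_right algebra_simps)
  finally show ?thesis
    by (metis add_left_cancel add_right_cancel)
qed

lemma zero_offdiagonal: "D (0, m, 0) = 0"
proof -
  have "D (1, m, 0) = 0" "D (1, 0, 0) = 0"
    by (simp_all add: idempotent_zero)
  then show ?thesis
    using D_diff[of "(1, m, 0)" "(1, 0, 0)"] by simp
qed

lemma zero_left_corner:
  assumes "faithful_left la"
  shows "D (a, 0, 0) = 0"
proof -
  obtain x y z where xyz: "D (a, 0, 0) = (x, y, z)"
    by (cases "D (a, 0, 0)") auto
  define V where "V = (a, 0::'m, 0::'b)"
  have "D (1, 0, 0) = 0"
    by (simp add: idempotent_zero)
  moreover have "(1, 0, 0) \<odot> V + V \<odot> (1, 0, 0) = 2 *\<^sub>R V"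
    by (simp add: V_def scaleR_2)
  ultimately have "2 *\<^sub>R D V = (1, 0, 0) \<odot> D V + D V \<odot> (1, 0, 0)"
    using polarization[of "(1, 0, 0)" V]
    by (simp add: D_scaleR mult_zero_left mult_zero_right del: mult_Pair)
  then have "y = 0" "z = 0"
    using xyz by (simp_all add: V_def scaleR_2) (simp_all flip: scaleR_2)
  then have "D (a, m, 0) = (x, 0, 0)" for m
    using D_add[of "(a, 0, 0)" "(0, m, 0)"] zero_offdiagonal xyz by simp
  then have "la x m = 0" for m
    using commuting[of "(a, m, 0)"] by simp
  then have "x = 0"
    using assms by (simp add: faithful_left_def)
  with xyz \<open>y = 0\<close> \<open>z = 0\<close> show ?thesis
    by (simp add: zero_prod_def)
qed

lemma zero_right_corner:
  assumes "faithful_right rb"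
  shows "D (0, 0, b) = 0"
proof -
  obtain x y z where xyz: "D (0, 0, b) = (x, y, z)"
    by (cases "D (0, 0, b)") auto
  define V where "V = (0::'a, 0::'m, b)"
  have "D (0, 0, 1) = 0"
    by (simp add: idempotent_zero)
  moreover have "(0, 0, 1) \<odot> V + V \<odot> (0, 0, 1) = 2 *\<^sub>R V"
    by (simp add: V_def scaleR_2)
  ultimately have "2 *\<^sub>R D V = (0, 0, 1) \<odot> D V + D V \<odot> (0, 0, 1)"
    using polarization[of "(0, 0, 1)" V]
    by (simp add: D_scaleR mult_zero_left mult_zero_right del: mult_Pair)
  then have "x = 0" "y = 0"
    using xyz by (simp_all add: V_def scaleR_2) (simp_all flip: scaleR_2)
  then have "D (0, m, b) = (0, 0, z)" for m
    using D_add[of "(0, m, 0)" "(0, 0, b)"] zero_offdiagonal xyz by simp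
  then have "rb m z = 0" for m
    using commuting[of "(0, m, b)"] by simp
  then have "z = 0"
    using assms by (simp add: faithful_right_def)
  with xyz \<open>x = 0\<close> \<open>y = 0\<close> show ?thesis
    by (simp add: zero_prod_def)
qed

theorem zero:
  assumes "faithful_left la" and "faithful_right rb"
  shows "D V = 0"
proof -
  obtain a m b where V: "V = (a, 0, 0) + (0, m, 0) + (0, 0, b)"
    by (cases V) simp
  have "D V = D (a, 0, 0) + D (0, m, 0) + D (0, 0, b)"
    by (simp only: V D_add)
  then show ?thesis
    using zero_left_corner[OF assms(1)] zero_offdiagonal zero_right_corner[OF assms(2)]
    by simp
qed

end

context tri_algebra
begin

lemma eq_mult_center_if_jordan_commuting:
  assumes "linear \<Omega>" and c: "c \<in> tri_center la rb"
    and jordan: "\<And>U. \<Omega> (U \<odot> U) + (U \<odot> U) \<odot> c = 2 *\<^sub>R (U \<odot> \<Omega> U)"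
    and commuting: "\<And>U. U \<odot> \<Omega> U = \<Omega> U \<odot> U"
    and "faithful_left la" and "faithful_right rb"
  shows "\<Omega> V = V \<odot> c"
proof -
  define D where "D U = \<Omega> U - U \<odot> c" for U
  have UcU: "(U \<odot> c) \<odot> U = U \<odot> (U \<odot> c)" for U
    by (simp only: mult_assoc center_commute[OF c])
  interpret commuting_jordan_derivation la rb D
  proof (intro commuting_jordan_derivation.intro commuting_jordan_derivation_axioms.intro
      tri_algebra_axioms)
    show "linear D"
      unfolding D_def by (intro linear_compose_sub assms(1) linear_mult_right)
    fix U
    show "U \<odot> D U = D U \<odot> U"
      by (simp add: D_def mult_diff_left mult_diff_right commuting UcU del: mult_Pair)
    have "D (U \<odot> U) = 2 *\<^sub>R (U \<odot> \<Omega> U) - 2 *\<^sub>R ((U \<odot> U) \<odot> c)"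
      using jordan[of U] by (simp add: D_def algebra_simps scaleR_2 del: mult_Pair)
    then show "D (U \<odot> U) = U \<odot> D U + D U \<odot> U"
      by (simp add: D_def mult_diff_left mult_diff_right commuting UcU mult_assoc scaleR_2
          center_commute[OF c] del: mult_Pair)
  qed
  show ?thesis
    using zero[OF assms(5,6), of V] by (simp add: D_def)
qed

end

section \<open>The functional identities\<close>

locale tri_functional_identity = tri_algebra la rb
  for la :: "'a::real_normed_algebra_1 \<Rightarrow> 'm::real_normed_vector \<Rightarrow> 'm"
    and rb :: "'m \<Rightarrow> 'b::real_normed_algebra_1 \<Rightarrow> 'm" +
  fixes \<Psi> \<Omega> :: "'a \<times> 'm \<times> 'b \<Rightarrow> 'a \<times> 'm \<times> 'b"
    and \<gamma> :: "'a \<times> 'm \<times> 'b"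
    and n :: nat
  assumes faithful_left: "faithful_left la" and faithful_right: "faithful_right rb"
    and n_gt_1: "1 < n"
    and gamma_invertible: "tri_invertible la rb \<gamma>"
    and linear_Psi: "linear \<Psi>" and linear_Omega: "linear \<Omega>"
    and Omega_one_central: "\<Omega> tri_one \<in> tri_center la rb"
begin

lemma gamma_cancel:
  assumes "\<gamma> \<odot> X = \<gamma> \<odot> Y"
  shows "X = Y"
proof -
  obtain W where W: "W \<odot> \<gamma> = tri_one"
    using gamma_invertible unfolding tri_invertible_def by blast
  have "(W \<odot> \<gamma>) \<odot> X = (W \<odot> \<gamma>) \<odot> Y"
    using assms by (simp only: mult_assoc)
  then show ?thesis
    by (simp only: W one_mult)
qed

lemma Psi_pow_one_plus:
  "\<Psi> (pow (tri_one + t *\<^sub>R U) n) = (\<Sum>j\<le>n. t^j *\<^sub>R (real (n choose j) *\<^sub>R \<Psi> (pow U j)))"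
  by (simp only: pow_one_plus_scaleR linear_sum[OF linear_Psi] linear_scale[OF linear_Psi] o_def)

(* The expansion of the (n - 1)-st power is padded to degree n, where its coefficient
   (n - 1 choose n) vanishes, so that all polynomials in t below share the bound n. *)
lemma pred_pow_one_plus:
  "pow (tri_one + t *\<^sub>R U) (n - 1) = (\<Sum>j\<le>n. t^j *\<^sub>R (real (n - 1 choose j) *\<^sub>R pow U j))"
  by (rule pow_one_plus_scaleR_upto) simp

lemma Omega_pred_pow_one_plus:
  "\<Omega> (pow (tri_one + t *\<^sub>R U) (n - 1)) = (\<Sum>j\<le>n. t^j *\<^sub>R (real (n - 1 choose j) *\<^sub>R \<Omega> (pow U j)))"
  by (simp only: pred_pow_one_plus linear_sum[OF linear_Omega] linear_scale[OF linear_Omega] o_def)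

lemma Omega_one_plus: "\<Omega> (tri_one + t *\<^sub>R U) = \<Omega> tri_one + t *\<^sub>R \<Omega> U"
  by (simp only: linear_add[OF linear_Omega] linear_scale[OF linear_Omega])

lemma identity_i_low_coeffs:
  assumes "\<And>X. \<Psi> (pow X n) = \<gamma> \<odot> (pow X (n - 1) \<odot> \<Omega> X)"
  shows "real n *\<^sub>R \<Psi> U = real (n - 1) *\<^sub>R (\<gamma> \<odot> (U \<odot> \<Omega> tri_one)) + \<gamma> \<odot> \<Omega> U" (is ?coeff_t)
    and "real (n choose 2) *\<^sub>R \<Psi> (U \<odot> U) =
      real (n - 1 choose 2) *\<^sub>R (\<gamma> \<odot> ((U \<odot> U) \<odot> \<Omega> tri_one)) + real (n - 1) *\<^sub>R (\<gamma> \<odot> (U \<odot> \<Omega> U))" (is ?coeff_t2)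
proof -
  have "(\<Sum>j\<le>n. t^j *\<^sub>R (real (n choose j) *\<^sub>R \<Psi> (pow U j))) =
      (\<Sum>j\<le>n. t^j *\<^sub>R (real (n - 1 choose j) *\<^sub>R (\<gamma> \<odot> (pow U j \<odot> \<Omega> tri_one)))) +
      t *\<^sub>R (\<Sum>j\<le>n. t^j *\<^sub>R (real (n - 1 choose j) *\<^sub>R (\<gamma> \<odot> (pow U j \<odot> \<Omega> U))))" for t
    unfolding Psi_pow_one_plus[symmetric] assms pred_pow_one_plus Omega_one_plus
    by (simp add: mult_sum_left mult_sum_right mult_add_right mult_scaleR_left mult_scaleR_right
        scaleR_sum_right del: mult_Pair tri_pow.simps)
  from polyfun_vector_eq_shift_coeffs[OF this, of 0] polyfun_vector_eq_shift_coeffs[OF this, of 1]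
  show ?coeff_t and ?coeff_t2
    using n_gt_1 by (simp_all add: numeral_2_eq_2 del: mult_Pair)
qed

lemma identity_i_imp_commuting:
  assumes "\<And>X. \<gamma> \<odot> (pow X (n - 1) \<odot> \<Omega> X) = \<gamma> \<odot> (\<Omega> X \<odot> pow X (n - 1))"
  shows "U \<odot> \<Omega> U = \<Omega> U \<odot> U"
proof -
  have "(\<Sum>j\<le>n. t^j *\<^sub>R (real (n - 1 choose j) *\<^sub>R (pow U j \<odot> \<Omega> tri_one))) +
      t *\<^sub>R (\<Sum>j\<le>n. t^j *\<^sub>R (real (n - 1 choose j) *\<^sub>R (pow U j \<odot> \<Omega> U))) =
      (\<Sum>j\<le>n. t^j *\<^sub>R (real (n - 1 choose j) *\<^sub>R (\<Omega> tri_one \<odot> pow U j))) +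
      t *\<^sub>R (\<Sum>j\<le>n. t^j *\<^sub>R (real (n - 1 choose j) *\<^sub>R (\<Omega> U \<odot> pow U j)))" for t
    using gamma_cancel[OF assms[of "tri_one + t *\<^sub>R U"]]
    unfolding pred_pow_one_plus Omega_one_plus
    by (simp add: mult_sum_left mult_sum_right mult_add_left mult_add_right mult_scaleR_left
        mult_scaleR_right scaleR_sum_right scaleR_add_right sum.distrib mult_ac
        del: mult_Pair tri_pow.simps)
  from polyfun_vector_shift_eq_coeffs[OF this, of 1] n_gt_1
  have "real (n - 1) *\<^sub>R (U \<odot> \<Omega> U) = real (n - 1) *\<^sub>R (\<Omega> U \<odot> U)"
    by (simp add: numeral_2_eq_2 center_commute[OF Omega_one_central] del: mult_Pair)
  with n_gt_1 show ?thesis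
    by simp
qed

lemma identity_ii_low_coeffs:
  assumes "\<And>X. \<Psi> (pow X n) = \<gamma> \<odot> (X \<odot> \<Omega> (pow X (n - 1)))"
  shows "real n *\<^sub>R \<Psi> U = real (n - 1) *\<^sub>R (\<gamma> \<odot> \<Omega> U) + \<gamma> \<odot> (U \<odot> \<Omega> tri_one)" (is ?coeff_t)
    and "real (n choose 2) *\<^sub>R \<Psi> (U \<odot> U) =
      real (n - 1 choose 2) *\<^sub>R (\<gamma> \<odot> \<Omega> (U \<odot> U)) + real (n - 1) *\<^sub>R (\<gamma> \<odot> (U \<odot> \<Omega> U))" (is ?coeff_t2)
proof -
  have "(\<Sum>j\<le>n. t^j *\<^sub>R (real (n choose j) *\<^sub>R \<Psi> (pow U j))) =
      (\<Sum>j\<le>n. t^j *\<^sub>R (real (n - 1 choose j) *\<^sub>R (\<gamma> \<odot> \<Omega> (pow U j)))) +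
      t *\<^sub>R (\<Sum>j\<le>n. t^j *\<^sub>R (real (n - 1 choose j) *\<^sub>R (\<gamma> \<odot> (U \<odot> \<Omega> (pow U j)))))" for t
    unfolding Psi_pow_one_plus[symmetric] assms Omega_pred_pow_one_plus
    by (simp add: mult_sum_left mult_sum_right mult_add_left mult_add_right mult_scaleR_left
        mult_scaleR_right scaleR_sum_right scaleR_add_right sum.distrib mult_ac
        del: mult_Pair tri_pow.simps)
  from polyfun_vector_eq_shift_coeffs[OF this, of 0] polyfun_vector_eq_shift_coeffs[OF this, of 1]
  show ?coeff_t and ?coeff_t2
    using n_gt_1 by (simp_all add: numeral_2_eq_2 del: mult_Pair)
qed

lemma identity_ii_imp_commuting:
  assumes "\<And>X. \<gamma> \<odot> (X \<odot> \<Omega> (pow X (n - 1))) = \<gamma> \<odot> (\<Omega> (pow X (n - 1)) \<odot> X)"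
  shows "U \<odot> \<Omega> U = \<Omega> U \<odot> U"
proof -
  have "(\<Sum>j\<le>n. t^j *\<^sub>R (real (n - 1 choose j) *\<^sub>R \<Omega> (pow U j))) +
      t *\<^sub>R (\<Sum>j\<le>n. t^j *\<^sub>R (real (n - 1 choose j) *\<^sub>R (U \<odot> \<Omega> (pow U j)))) =
      (\<Sum>j\<le>n. t^j *\<^sub>R (real (n - 1 choose j) *\<^sub>R \<Omega> (pow U j))) +
      t *\<^sub>R (\<Sum>j\<le>n. t^j *\<^sub>R (real (n - 1 choose j) *\<^sub>R (\<Omega> (pow U j) \<odot> U)))" for t
    using gamma_cancel[OF assms[of "tri_one + t *\<^sub>R U"]]
    unfolding Omega_pred_pow_one_plus
    by (simp add: mult_sum_left mult_sum_right mult_add_left mult_add_right mult_scaleR_left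
        mult_scaleR_right scaleR_sum_right scaleR_add_right sum.distrib mult_ac
        del: mult_Pair tri_pow.simps)
  from polyfun_vector_shift_eq_coeffs[OF this, of 1] n_gt_1
  have "real (n - 1) *\<^sub>R (U \<odot> \<Omega> U) = real (n - 1) *\<^sub>R (\<Omega> U \<odot> U)"
    by (simp add: numeral_2_eq_2 del: mult_Pair)
  with n_gt_1 show ?thesis
    by simp
qed

lemma Omega_eq_mult_if_jordan_commuting:
  assumes "\<And>U. \<Omega> (U \<odot> U) + (U \<odot> U) \<odot> \<Omega> tri_one = 2 *\<^sub>R (U \<odot> \<Omega> U)"
    and "\<And>U. U \<odot> \<Omega> U = \<Omega> U \<odot> U"
  shows "\<Omega> V = V \<odot> \<Omega> tri_one"
  using eq_mult_center_if_jordan_commuting[OF linear_Omega Omega_one_central assms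
      faithful_left faithful_right] .

lemma identity_i_imp_mult_forms:
  assumes Psi: "\<And>X. \<Psi> (pow X n) = \<gamma> \<odot> (pow X (n - 1) \<odot> \<Omega> X)"
    and commuting: "\<And>X. \<gamma> \<odot> (pow X (n - 1) \<odot> \<Omega> X) = \<gamma> \<odot> (\<Omega> X \<odot> pow X (n - 1))"
  shows "\<Omega> V = V \<odot> \<Omega> tri_one" and "\<Psi> V = \<gamma> \<odot> (V \<odot> \<Omega> tri_one)"
proof -
  (* \<Psi>(U U) occurs both in the t-coefficient for U U and in the t^2-coefficient for U. *)
  have "\<Omega> (U \<odot> U) + (U \<odot> U) \<odot> \<Omega> tri_one = 2 *\<^sub>R (U \<odot> \<Omega> U)" for U
  proof (rule gamma_cancel)
    show "\<gamma> \<odot> (\<Omega> (U \<odot> U) + (U \<odot> U) \<odot> \<Omega> tri_one) = \<gamma> \<odot> (2 *\<^sub>R (U \<odot> \<Omega> U))"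
      using binomial_coeffs_elimination[OF n_gt_1 identity_i_low_coeffs(1)[OF Psi, of "U \<odot> U"]
          identity_i_low_coeffs(2)[OF Psi, of U]]
      by (simp only: mult_add_right mult_scaleR_right add.commute)
  qed
  then show Omega: "\<Omega> V = V \<odot> \<Omega> tri_one" for V
    by (rule Omega_eq_mult_if_jordan_commuting[OF _ identity_i_imp_commuting[OF commuting]])
  show "\<Psi> V = \<gamma> \<odot> (V \<odot> \<Omega> tri_one)"
    using eq_if_scaleR_eq_pred_add[of n] identity_i_low_coeffs(1)[OF Psi, of V] n_gt_1
    unfolding Omega[of V] by simp
qed

lemma identity_ii_imp_mult_forms:
  assumes Psi: "\<And>X. \<Psi> (pow X n) = \<gamma> \<odot> (X \<odot> \<Omega> (pow X (n - 1)))"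
    and commuting: "\<And>X. \<gamma> \<odot> (X \<odot> \<Omega> (pow X (n - 1))) = \<gamma> \<odot> (\<Omega> (pow X (n - 1)) \<odot> X)"
  shows "\<Omega> V = V \<odot> \<Omega> tri_one" and "\<Psi> V = \<gamma> \<odot> (V \<odot> \<Omega> tri_one)"
proof -
  have "\<Omega> (U \<odot> U) + (U \<odot> U) \<odot> \<Omega> tri_one = 2 *\<^sub>R (U \<odot> \<Omega> U)" for U
  proof (rule gamma_cancel)
    show "\<gamma> \<odot> (\<Omega> (U \<odot> U) + (U \<odot> U) \<odot> \<Omega> tri_one) = \<gamma> \<odot> (2 *\<^sub>R (U \<odot> \<Omega> U))"
      using binomial_coeffs_elimination[OF n_gt_1 identity_ii_low_coeffs(1)[OF Psi, of "U \<odot> U"]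
          identity_ii_low_coeffs(2)[OF Psi, of U]]
      by (simp only: mult_add_right mult_scaleR_right)
  qed
  then show Omega: "\<Omega> V = V \<odot> \<Omega> tri_one" for V
    by (rule Omega_eq_mult_if_jordan_commuting[OF _ identity_ii_imp_commuting[OF commuting]])
  show "\<Psi> V = \<gamma> \<odot> (V \<odot> \<Omega> tri_one)"
    using eq_if_scaleR_eq_pred_add[of n] identity_ii_low_coeffs(1)[OF Psi, of V] n_gt_1
    unfolding Omega[of V] by simp
qed

end

theorem corollary2p3:
  fixes la :: "'a::real_normed_algebra_1 \<Rightarrow> 'm::real_normed_vector \<Rightarrow> 'm"
    and rb :: "'m \<Rightarrow> 'b::real_normed_algebra_1 \<Rightarrow> 'm"
    and \<Psi> \<Omega> :: "'a \<times> 'm \<times> 'b \<Rightarrow> 'a \<times> 'm \<times> 'b"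
    and \<gamma> :: "'a \<times> 'm \<times> 'b"
    and n :: nat
  assumes "normed_bimodule la rb"
    and "faithful_left la"
    and "faithful_right rb"
    and "n > 1"
    and "\<gamma> \<in> tri_center la rb"
    and "tri_invertible la rb \<gamma>"
    and "linear \<Psi>"
    and "linear \<Omega>"
    and "\<Omega> tri_one \<in> tri_center la rb"
    and "(\<forall>X. \<Psi> (tri_pow la rb X n) = tri_mult la rb \<gamma> (tri_mult la rb (tri_pow la rb X (n - 1)) (\<Omega> X))
              \<and> tri_mult la rb \<gamma> (tri_mult la rb (tri_pow la rb X (n - 1)) (\<Omega> X))
                  = tri_mult la rb \<gamma> (tri_mult la rb (\<Omega> X) (tri_pow la rb X (n - 1))))
       \<or> (\<forall>X. \<Psi> (tri_pow la rb X n) = tri_mult la rb \<gamma> (tri_mult la rb X (\<Omega> (tri_pow la rb X (n - 1))))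
              \<and> tri_mult la rb \<gamma> (tri_mult la rb X (\<Omega> (tri_pow la rb X (n - 1))))
                  = tri_mult la rb \<gamma> (tri_mult la rb (\<Omega> (tri_pow la rb X (n - 1))) X))"
  shows "tri_continuous \<Psi> \<and> tri_continuous \<Omega>"
proof -
  interpret tri_functional_identity la rb \<Psi> \<Omega> \<gamma> n
    using assms by (simp add: tri_functional_identity_def tri_functional_identity_axioms_def
        tri_algebra_def)
  define c where "c = \<Omega> tri_one"
  have "\<Omega> V = V \<odot> c \<and> \<Psi> V = \<gamma> \<odot> (V \<odot> c)" for V
    using assms(10) identity_i_imp_mult_forms[of V] identity_ii_imp_mult_forms[of V]
    unfolding c_def by blast
  then have "\<Omega> = (\<lambda>V. tri_one \<odot> (V \<odot> c))" and "\<Psi> = (\<lambda>V. \<gamma> \<odot> (V \<odot> c))"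
    by (simp_all add: fun_eq_iff del: mult_Pair)
  then show ?thesis
    using tri_continuous_sandwich[of tri_one c] tri_continuous_sandwich[of \<gamma> c] by simp
qed

end
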